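(* Let $N = n+1 \ge 3$ be odd. The set \[ \Delta_N = \{ G^{\mathbf{0}}_{\boldsymbol{\lambda}} \mid \boldsymbol{\lambda} \in \Lambda_N \} \] is a regular, unimodular triangulation of $P_{C_N}$, and it is induced by the height function $\omega: S_{C_N}\to\mathbb{Z}$ with $\omega(\mathbf{0}) = 0$ and $\omega(\mathbf{a}) = 1$ for all $\mathbf{a} \neq \mathbf{0}$.
   Context: $\mathbf{e}_1,\dots,\mathbf{e}_n$ is the standard basis of $\mathbb{R}^n$, with $\mathbf{e}_0 = \mathbf{e}_N = \mathbf{0}$. The cycle graph $C_N$ has vertices $0,\dots,N-1$ and edges $\{0,1\},\dots,\{N-2,N-1\},\{N-1,0\}$. $P_{C_N} = \operatorname{conv}\{\mathbf{e}_i-\mathbf{e}_j \mid \{i,j\}\text{ an edge}\}$ (both orientations) and $S_{C_N} = \{\mathbf{0}\}\cup\{\mathbf{e}_i-\mathbf{e}_j\mid\{i,j\}\text{ an edge}\}$. For odd $N$, $\Lambda_N = \bigcup_{j=1}^N \Lambda_{j,N}$ with $\Lambda_{j,N} = \{(\lambda_1,\dots,\lambda_N) \mid \lambda_j = 0,\ \lambda_i\in\{-1,1\}\text{ for } i\ne j,\ \sum_i\lambda_i = 0\}$. For $\boldsymbol{\lambda}\in\Lambda_{j,N}$, $G^{\mathbf{0}}_{\boldsymbol{\lambda}} = \operatorname{conv}(\{\mathbf{0}\}\cup\{\lambda_i(\mathbf{e}_{i-1}-\mathbf{e}_i) \mid 1\le i\le N,\ i\neq j\})$. A triangulation is unimodular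 if each simplex is a lattice simplex of normalized volume $1$; it is regular and induced by $\omega$ if its simplices are exactly the projections to $\mathbb{R}^n$ of the lower facets (facets whose inner normal has positive last coordinate) of $\operatorname{conv}\{(\mathbf{a},\omega(\mathbf{a}))\mid\mathbf{a}\in S_{C_N}\}$. *)

theory Defs
  imports "HOL-Analysis.Analysis"
begin

text \<open>We model R^n as real^'n for a finite linearly ordered index type 'n with
  CARD('n) = n; coordinate k (1 <= k <= n) is the k-th smallest element of 'n.
  N = n + 1 = CARD('n) + 1.\<close>

definition cidx :: "nat \<Rightarrow> 'n::{finite,linorder}" where
  "cidx k = sorted_list_of_set (UNIV :: 'n set) ! (k - 1)"

text \<open>Standard basis vector e_i, with e_i = 0 unless 1 <= i <= n (so e_0 = e_N = 0).\<close>
definition ev :: "nat \<Rightarrow> real ^ 'n::{finite,linorder}" where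
  "ev i = (if 1 \<le> i \<and> i \<le> CARD('n) then axis (cidx i) 1 else 0)"

definition cyc_edge :: "nat \<Rightarrow> nat \<Rightarrow> nat \<Rightarrow> bool" where
  "cyc_edge N i j \<longleftrightarrow> i < N \<and> j < N \<and> i \<noteq> j \<and> (j = Suc i mod N \<or> i = Suc j mod N)"

definition cyc_roots :: "(real ^ 'n::{finite,linorder}) set" where
  "cyc_roots = {ev i - ev j | i j. cyc_edge (CARD('n) + 1) i j}"

definition P_C :: "(real ^ 'n::{finite,linorder}) set" where
  "P_C = convex hull cyc_roots"

definition S_C :: "(real ^ 'n::{finite,linorder}) set" where
  "S_C = insert 0 cyc_roots"

text \<open>Lambda_{j,N}: tuples (lambda_1..lambda_N), encoded as functions nat => int
  vanishing outside {1..N}.\<close>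
definition Lam :: "nat \<Rightarrow> nat \<Rightarrow> (nat \<Rightarrow> int) set" where
  "Lam j N = {lam. lam j = 0 \<and> (\<forall>i\<in>{1..N} - {j}. lam i \<in> {-1, 1})
                 \<and> (\<forall>i. i \<notin> {1..N} \<longrightarrow> lam i = 0) \<and> (\<Sum>i=1..N. lam i) = 0}"

definition G0 :: "nat \<Rightarrow> (nat \<Rightarrow> int) \<Rightarrow> (real ^ 'n::{finite,linorder}) set" where
  "G0 j lam = convex hull (insert 0
      {of_int (lam i) *\<^sub>R (ev (i - 1) - ev i) | i. 1 \<le> i \<and> i \<le> CARD('n) + 1 \<and> i \<noteq> j})"

definition Delta :: "(real ^ 'n::{finite,linorder}) set set" where
  "Delta = {G0 j lam | j lam. j \<in> {1..CARD('n) + 1} \<and> lam \<in> Lam j (CARD('n) + 1)}"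

definition is_triangulation :: "(real ^ 'n::finite) set set \<Rightarrow> (real ^ 'n) set \<Rightarrow> bool" where
  "is_triangulation D P \<longleftrightarrow> finite D \<and> (\<forall>T\<in>D. int CARD('n) simplex T) \<and> \<Union>D = P
     \<and> (\<forall>T1\<in>D. \<forall>T2\<in>D. (T1 \<inter> T2) face_of T1 \<and> (T1 \<inter> T2) face_of T2)"

definition lattice_point :: "real ^ 'n::finite \<Rightarrow> bool" where
  "lattice_point v \<longleftrightarrow> (\<forall>i. v $ i \<in> \<int>)"

definition lattice_simplex :: "(real ^ 'n::finite) set \<Rightarrow> bool" where
  "lattice_simplex T \<longleftrightarrow> (\<exists>C. \<not> affine_dependent C \<and> card C = CARD('n) + 1
      \<and> T = convex hull C \<and> (\<forall>v\<in>C. lattice_point v))"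

definition normalized_volume :: "(real ^ 'n::finite) set \<Rightarrow> real" where
  "normalized_volume T = fact CARD('n) * measure lborel T"

definition unimodular :: "(real ^ 'n::finite) set set \<Rightarrow> bool" where
  "unimodular D \<longleftrightarrow> (\<forall>T\<in>D. lattice_simplex T \<and> normalized_volume T = 1)"

definition lifted :: "(real ^ 'n::finite) set \<Rightarrow> (real ^ 'n \<Rightarrow> real) \<Rightarrow> ((real ^ 'n) \<times> real) set" where
  "lifted S \<omega> = convex hull ((\<lambda>a. (a, \<omega> a)) ` S)"

definition lower_facet :: "((real ^ 'n::finite) \<times> real) set \<Rightarrow> ((real ^ 'n) \<times> real) set \<Rightarrow> bool" where
  "lower_facet Q F \<longleftrightarrow> F facet_of Q \<and>
     (\<exists>u b. snd u > 0 \<and> (\<forall>p\<in>Q. b \<le> u \<bullet> p) \<and> F = {p\<in>Q. u \<bullet> p = b})"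

definition induced_by :: "(real ^ 'n::finite) set \<Rightarrow> (real ^ 'n \<Rightarrow> real) \<Rightarrow> (real ^ 'n) set set \<Rightarrow> bool" where
  "induced_by S \<omega> D \<longleftrightarrow> D = {fst ` F | F. lower_facet (lifted S \<omega>) F}"

definition regular_triangulation :: "(real ^ 'n::finite) set \<Rightarrow> (real ^ 'n) set set \<Rightarrow> bool" where
  "regular_triangulation S D \<longleftrightarrow> (\<exists>\<omega>. induced_by S \<omega> D)"

end

theory Submission
  imports Defs
begin

text \<open>Let \<open>w\<^sub>i = e\<^bsub>i-1\<^esub> - e\<^sub>i\<close> for \<open>i = 1..N\<close>. The roots of \<open>C\<^sub>N\<close> are the \<open>\<plusminus>w\<^sub>i\<close>, and the \<open>w\<^sub>i\<close>
  satisfy the single relation \<open>\<Sum>w\<^sub>i = 0\<close>, so for \<open>\<lambda> \<in> \<Lambda>\<^sub>N\<close> there is a linear functional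
  \<open>h\<^sub>\<lambda>\<close> with \<open>h\<^sub>\<lambda>(w\<^sub>i) = \<lambda>\<^sub>i\<close>. It is at most \<open>1\<close> on the roots, with equality exactly at
  the vertices \<open>\<lambda>\<^sub>iw\<^sub>i\<close> of \<open>G\<^sup>0\<^sub>\<lambda>\<close>; hence \<open>G\<^sup>0\<^sub>\<lambda>\<close> is the projection of the lower facet of the
  lifted polytope with inner normal \<open>(-h\<^sub>\<lambda>, 1)\<close>, and \<open>h\<^sub>\<mu> \<le> h\<^sub>\<lambda>\<close> on \<open>G\<^sup>0\<^sub>\<lambda>\<close>, which makes
  \<open>G\<^sup>0\<^sub>\<lambda> \<inter> G\<^sup>0\<^sub>\<mu>\<close> a common face. A point \<open>\<Sum>s\<^sub>iw\<^sub>i\<close> with \<open>\<Sum>|s\<^sub>i| \<le> 1\<close> of \<open>P\<^sub>C\<^sub>N\<close> lies in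
  \<open>G\<^sup>0\<^sub>\<lambda>\<close>, where \<open>s\<^sub>j\<close> is a median of the \<open>s\<^sub>i\<close> and \<open>\<lambda>\<close> the sign pattern of \<open>s - s\<^sub>j\<close>.
  Conversely, every lower facet passes through the origin and has an inner normal \<open>(-h, 1)\<close>
  with \<open>|h(w\<^sub>i)| \<le> 1\<close>, where at least \<open>N - 1\<close> of these values are \<open>\<plusminus>1\<close>; since \<open>N\<close> is odd
  and \<open>\<Sum>h(w\<^sub>i) = 0\<close>, the remaining one is \<open>0\<close>, so \<open>h = h\<^sub>\<lambda>\<close> on the \<open>w\<^sub>i\<close>. Finally, the vertices
  of \<open>G\<^sup>0\<^sub>\<lambda>\<close> have an integral dual basis, so \<open>G\<^sup>0\<^sub>\<lambda>\<close> is a unimodular simplex.\<close>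

section \<open>Convex geometry\<close>

lemma affine_independent_insert_0_if_dual:
  fixes v g :: "'i \<Rightarrow> 'a::real_inner"
  assumes dual: "\<And>k i. k \<in> I \<Longrightarrow> i \<in> I \<Longrightarrow> g k \<bullet> v i = (if k = i then 1 else 0)"
  shows "inj_on v I" and "0 \<notin> v ` I" and "\<not> affine_dependent (insert 0 (v ` I))"
proof -
  show inj: "inj_on v I"
  proof (rule inj_onI)
    fix k i assume "k \<in> I" "i \<in> I" "v k = v i"
    then show "k = i"
      using dual[of k k] dual[of k i] by (auto split: if_splits)
  qed
  show zero: "0 \<notin> v ` I"
    using dual by fastforce
  show "\<not> affine_dependent (insert 0 (v ` I))"
  proof
    assume "affine_dependent (insert 0 (v ` I))"
    then have "dependent (v ` I)"
      using affine_dependent_iff_dependent[OF zero] by simp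
    then obtain S u where S: "finite S" "S \<subseteq> v ` I" "\<exists>x\<in>S. u x \<noteq> 0" "(\<Sum>x\<in>S. u x *\<^sub>R x) = 0"
      unfolding dependent_explicit by blast
    then obtain k where k: "k \<in> I" "v k \<in> S" "u (v k) \<noteq> 0"
      by blast
    have "0 = g k \<bullet> (\<Sum>x\<in>S. u x *\<^sub>R x)"
      using S(4) by simp
    also have "\<dots> = (\<Sum>x\<in>S. if x = v k then u x else 0)"
      unfolding inner_sum_right
    proof (rule sum.cong)
      fix x assume "x \<in> S"
      then obtain i where "i \<in> I" "x = v i"
        using S(2) by blast
      then show "g k \<bullet> u x *\<^sub>R x = (if x = v k then u x else 0)"
        using dual[OF k(1)] inj_onD[OF inj] k(1) by auto
    qed simp
    also have "\<dots> = u (v k)"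
      using S(1) k(2) by simp
    finally show False
      using k(3) by simp
  qed
qed

lemma convex_subconvex_combinations:
  fixes f :: "'i \<Rightarrow> 'a::real_vector"
  shows "convex {\<Sum>i\<in>I. t i *\<^sub>R f i | t. (\<forall>i\<in>I. 0 \<le> t i) \<and> sum t I \<le> 1}"
    (is "convex ?R")
proof (rule convexI)
  fix u v :: real and x y
  assume "x \<in> ?R" "y \<in> ?R" and uv: "0 \<le> u" "0 \<le> v" "u + v = 1"
  then obtain s t where
    s: "\<forall>i\<in>I. 0 \<le> s i" "sum s I \<le> 1" "x = (\<Sum>i\<in>I. s i *\<^sub>R f i)" and
    t: "\<forall>i\<in>I. 0 \<le> t i" "sum t I \<le> 1" "y = (\<Sum>i\<in>I. t i *\<^sub>R f i)"
    by blast
  have "sum (\<lambda>i. u * s i + v * t i) I = u * sum s I + v * sum t I"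
    by (simp add: sum.distrib sum_distrib_left)
  also have "\<dots> \<le> u + v"
    using s(2) t(2) uv by (intro add_mono) (auto intro: mult_left_le)
  finally have "sum (\<lambda>i. u * s i + v * t i) I \<le> 1"
    using uv by simp
  moreover have "u *\<^sub>R x + v *\<^sub>R y = (\<Sum>i\<in>I. (u * s i + v * t i) *\<^sub>R f i)"
    by (simp add: s(3) t(3) scaleR_sum_right sum.distrib scaleR_add_left)
  ultimately show "u *\<^sub>R x + v *\<^sub>R y \<in> ?R"
    using s(1) t(1) uv by (auto intro!: exI[of _ "\<lambda>i. u * s i + v * t i"])
qed

lemma convex_hull_insert_0_image:
  fixes f :: "'i \<Rightarrow> 'a::real_vector"
  assumes "finite I"
  shows "convex hull (insert 0 (f ` I)) =
    {\<Sum>i\<in>I. t i *\<^sub>R f i | t. (\<forall>i\<in>I. 0 \<le> t i) \<and> sum t I \<le> 1}"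
  (is "_ = ?R")
proof (rule hull_unique)
  show "insert 0 (f ` I) \<subseteq> ?R"
  proof
    fix x assume "x \<in> insert 0 (f ` I)"
    then consider "x = 0" | k where "k \<in> I" "x = f k"
      by blast
    then show "x \<in> ?R"
    proof cases
      case 1
      then show ?thesis
        by (auto intro!: exI[of _ "\<lambda>_. 0"])
    next
      case 2
      have "(\<Sum>i\<in>I. (if i = k then 1 else 0) *\<^sub>R f i) = f k"
        using assms 2 by (subst sum.remove[of I k]) auto
      moreover have "(\<Sum>i\<in>I. if i = k then 1 else 0) = (1::real)"
        using assms 2 by simp
      ultimately show ?thesis
        using 2 by (auto intro!: exI[of _ "\<lambda>i. if i = k then 1 else 0"])
    qed
  qed
  show "convex ?R"
    by (rule convex_subconvex_combinations)
  show "?R \<subseteq> T" if "insert 0 (f ` I) \<subseteq> T" and "convex T" for T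
  proof
    fix x assume "x \<in> ?R"
    then obtain t where t: "\<forall>i\<in>I. 0 \<le> t i" "sum t I \<le> 1" and x: "x = (\<Sum>i\<in>I. t i *\<^sub>R f i)"
      by blast
    show "x \<in> T"
    proof (cases "sum t I = 0")
      case True
      then show ?thesis
        using that t(1) assms by (simp add: x sum_nonneg_eq_0_iff)
    next
      case False
      then have pos: "0 < sum t I"
        using t(1) by (simp add: less_le sum_nonneg)
      have "(\<Sum>i\<in>I. (t i / sum t I) *\<^sub>R f i) \<in> T"
        using that t(1) pos assms
        by (intro convex_sum) (auto simp: sum_divide_distrib[symmetric])
      then have "sum t I *\<^sub>R (\<Sum>i\<in>I. (t i / sum t I) *\<^sub>R f i) + (1 - sum t I) *\<^sub>R 0 \<in> T"
        using that t(2) pos by (intro convexD) auto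
      then show ?thesis
        using pos by (simp add: x scaleR_sum_right)
    qed
  qed
qed

lemma convex_hull_Int_supporting_hyperplane:
  fixes S :: "'a::euclidean_space set"
  assumes "compact S" and "\<And>s. s \<in> S \<Longrightarrow> b \<le> u \<bullet> s"
  shows "convex hull S \<inter> {p. u \<bullet> p = b} = convex hull {s \<in> S. u \<bullet> s = b}"
proof
  have "convex hull S \<subseteq> {p. b \<le> u \<bullet> p}"
    using assms(2) by (intro hull_minimal) (auto simp: convex_halfspace_ge)
  then have "convex hull S \<inter> {p. u \<bullet> p = b} face_of convex hull S"
    by (intro face_of_Int_supporting_hyperplane_ge) auto
  then obtain S' where "S' \<subseteq> S" and S': "convex hull S \<inter> {p. u \<bullet> p = b} = convex hull S'"
    using face_of_convex_hull_subset[OF assms(1)] by metis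
  moreover have "S' \<subseteq> {p. u \<bullet> p = b}"
    using S' hull_subset[of S' convex] by blast
  ultimately show "convex hull S \<inter> {p. u \<bullet> p = b} \<subseteq> convex hull {s \<in> S. u \<bullet> s = b}"
    by (metis (mono_tags, lifting) S' hull_mono mem_Collect_eq subset_iff)
  show "convex hull {s \<in> S. u \<bullet> s = b} \<subseteq> convex hull S \<inter> {p. u \<bullet> p = b}"
    by (intro Int_greatest hull_mono hull_minimal) (auto simp: convex_hyperplane)
qed

lemma facet_of_if_aff_dim_ge:
  fixes Q :: "'a::euclidean_space set"
  assumes "convex Q" "F face_of Q" "F \<noteq> Q" "F \<noteq> {}" "int DIM('a) - 1 \<le> aff_dim F"
  shows "F facet_of Q" and "aff_dim Q = DIM('a)"
proof -
  have "aff_dim F < aff_dim Q" "aff_dim Q \<le> DIM('a)"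
    using face_of_aff_dim_lt assms aff_dim_le_DIM by blast+
  then show "aff_dim Q = DIM('a)" and "F facet_of Q"
    using assms by (auto simp: facet_of_def)
qed

lemma aff_dim_Int_hyperplanes_less:
  fixes a c :: "'a::euclidean_space"
  assumes "a \<noteq> 0" and "\<not> {x. a \<bullet> x = b} \<subseteq> {x. c \<bullet> x = d}"
  shows "aff_dim ({x. a \<bullet> x = b} \<inter> {x. c \<bullet> x = d}) < int DIM('a) - 1"
proof (cases "{x. a \<bullet> x = b} \<inter> {x. c \<bullet> x = d} = {}")
  case True
  then show ?thesis
    using DIM_positive[where 'a='a] by simp
next
  case False
  then show ?thesis
    using aff_dim_affine_Int_hyperplane[OF affine_hyperplane, of a b c d]
      aff_dim_hyperplane[OF assms(1), of b] assms(2)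
    by simp
qed

text \<open>If \<open>b < 0\<close>, the face misses the lifted origin, so it lies in the hyperplane at height \<open>1\<close>
  cut by a second hyperplane, which is too small for dimension \<open>DIM('a)\<close>.\<close>

lemma supporting_hyperplane_through_origin:
  fixes u :: "'a::euclidean_space \<times> real" and R :: "'a set"
  defines "Q \<equiv> convex hull (insert (0, 0) ((\<lambda>r. (r, 1)) ` R))"
  assumes "finite R" and "snd u > 0" and supp: "\<forall>p\<in>Q. b \<le> u \<bullet> p"
    and dim: "aff_dim {p\<in>Q. u \<bullet> p = b} = DIM('a)"
  shows "b = 0"
proof (rule ccontr)
  let ?G = "insert (0, 0) ((\<lambda>r. (r, 1)) ` R)"
  define e :: "'a \<times> real" where "e = (0, 1)"
  assume "b \<noteq> 0"
  have "b \<le> u \<bullet> 0"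
    using supp by (simp add: Q_def hull_inc zero_prod_def)
  with \<open>b \<noteq> 0\<close> have b: "b < 0"
    by simp
  have "{p\<in>Q. u \<bullet> p = b} = convex hull ?G \<inter> {p. u \<bullet> p = b}"
    unfolding Q_def by blast
  also have "\<dots> = convex hull {g \<in> ?G. u \<bullet> g = b}"
    using supp assms(2) by (intro convex_hull_Int_supporting_hyperplane finite_imp_compact)
      (simp_all add: Q_def hull_inc)
  also have "\<dots> \<subseteq> {p. e \<bullet> p = 1} \<inter> {p. u \<bullet> p = b}"
  proof (rule hull_minimal)
    show "{g \<in> ?G. u \<bullet> g = b} \<subseteq> {p. e \<bullet> p = 1} \<inter> {p. u \<bullet> p = b}"
      using b by (auto simp: e_def inner_Pair simp flip: zero_prod_def)
  qed (simp add: convex_Int convex_hyperplane)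
  finally have "aff_dim {p\<in>Q. u \<bullet> p = b} \<le> aff_dim ({p. e \<bullet> p = 1} \<inter> {p. u \<bullet> p = b})"
    by (rule aff_dim_subset)
  moreover have not_sub: "\<not> {p. e \<bullet> p = 1} \<subseteq> {p. u \<bullet> p = b}"
  proof
    assume "{p. e \<bullet> p = 1} \<subseteq> {p. u \<bullet> p = b}"
    moreover have "e \<bullet> e = 1"
      by (simp add: e_def inner_Pair)
    ultimately have "u \<bullet> e = b"
      by blast
    then show False
      using assms(3) b by (cases u) (simp add: e_def inner_Pair)
  qed
  moreover have "e \<noteq> 0"
    by (simp add: e_def prod_eq_iff)
  then have "aff_dim ({p. e \<bullet> p = 1} \<inter> {p. u \<bullet> p = b}) < int DIM('a \<times> real) - 1"
    using not_sub by (rule aff_dim_Int_hyperplanes_less)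
  ultimately show False
    using dim by simp
qed

section \<open>Volumes of unimodular simplices\<close>

text \<open>The change-of-variables results of HOL-Analysis require well-ordered index types, so
  volumes are computed in a copy of the (finite, linearly ordered) index type registered as a
  well-order.\<close>

typedef 'a wo_copy = "UNIV :: 'a set"
  by simp

instantiation wo_copy :: (linorder) linorder
begin

definition less_eq_wo_copy :: "'a wo_copy \<Rightarrow> 'a wo_copy \<Rightarrow> bool" where
  "x \<le> y \<longleftrightarrow> Rep_wo_copy x \<le> Rep_wo_copy y"

definition less_wo_copy :: "'a wo_copy \<Rightarrow> 'a wo_copy \<Rightarrow> bool" where
  "x < y \<longleftrightarrow> Rep_wo_copy x < Rep_wo_copy y"

instance
  by standard (auto simp: less_eq_wo_copy_def less_wo_copy_def less_le Rep_wo_copy_inject[symmetric] dest: antisym)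

end

lemma bij_Rep_wo_copy: "bij Rep_wo_copy"
  using type_definition.Rep_range[OF type_definition_wo_copy]
  by (simp add: bij_def inj_on_def Rep_wo_copy_inject)

instance wo_copy :: (finite) finite
  by standard (simp add: bij_betw_finite[OF bij_Rep_wo_copy])

instance wo_copy :: ("{finite,linorder}") wellorder
proof
  fix P :: "'a wo_copy \<Rightarrow> bool" and a
  assume step: "\<And>x. (\<And>y. y < x \<Longrightarrow> P y) \<Longrightarrow> P x"
  show "P a"
  proof (induction a rule: measure_induct_rule[where f="\<lambda>x. card {y. y < x}"])
    case (less x)
    show ?case
    proof (rule step)
      fix y assume "y < x"
      then have "{z. z < y} \<subset> {z. z < x}"
        by auto
      then have "card {z. z < y} < card {z. z < x}"
        by (simp add: psubset_card_mono)
      then show "P y"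
        using less by blast
    qed
  qed
qed

lemma card_wo_copy: "CARD('a wo_copy) = CARD('a::finite)"
  by (rule bij_betw_same_card[OF bij_Rep_wo_copy])

definition to_wo_copy :: "real ^ 'a::finite \<Rightarrow> real ^ 'a wo_copy" where
  "to_wo_copy x = (\<chi> i. x $ Rep_wo_copy i)"

definition from_wo_copy :: "real ^ 'a wo_copy \<Rightarrow> real ^ 'a::finite" where
  "from_wo_copy y = (\<chi> c. y $ Abs_wo_copy c)"

lemma to_wo_copy_component [simp]: "to_wo_copy x $ i = x $ Rep_wo_copy i"
  by (simp add: to_wo_copy_def)

lemma from_wo_copy_component [simp]: "from_wo_copy y $ c = y $ Abs_wo_copy c"
  by (simp add: from_wo_copy_def)

lemma from_to_wo_copy [simp]: "from_wo_copy (to_wo_copy x) = x"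
  by (simp add: vec_eq_iff Abs_wo_copy_inverse)

lemma to_from_wo_copy [simp]: "to_wo_copy (from_wo_copy y) = y"
  by (simp add: vec_eq_iff Rep_wo_copy_inverse)

lemma linear_to_wo_copy: "linear to_wo_copy"
  by (rule linearI) (simp_all add: vec_eq_iff)

lemma inner_to_wo_copy: "to_wo_copy x \<bullet> to_wo_copy y = x \<bullet> y"
  using sum.reindex_bij_betw[OF bij_Rep_wo_copy, of "\<lambda>c. x $ c * y $ c"]
  by (simp add: inner_vec_def)

lemma borel_measurable_from_wo_copy:
  "(from_wo_copy :: _ \<Rightarrow> real ^ 'a::finite) \<in> borel_measurable borel"
proof -
  have "linear (from_wo_copy :: _ \<Rightarrow> real ^ 'a)"
    by (rule linearI) (simp_all add: vec_eq_iff)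
  then show ?thesis
    by (intro borel_measurable_continuous_onI linear_continuous_on linear_conv_bounded_linear[THEN iffD1])
qed

lemma prod_Basis_vec: "(\<Prod>b\<in>Basis. (x :: real ^ 'a::finite) \<bullet> b) = (\<Prod>i\<in>UNIV. x $ i)"
  by (simp add: Basis_vec_def cart_eq_inner_axis axis_eq_axis prod.UNION_disjoint)

lemma distr_from_wo_copy: "distr lborel borel (from_wo_copy :: _ \<Rightarrow> real ^ 'a::finite) = lborel"
proof (rule lborel_eqI[symmetric])
  fix l u :: "real ^ 'a"
  assume "\<And>b. b \<in> Basis \<Longrightarrow> l \<bullet> b \<le> u \<bullet> b"
  moreover have "axis c 1 \<in> (Basis :: (real ^ 'a) set)" for c
    by (auto simp: Basis_vec_def)
  ultimately have lu: "l $ c \<le> u $ c" for c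
    by (metis cart_eq_inner_axis)
  have "from_wo_copy -` box l u = box (to_wo_copy l) (to_wo_copy u)"
    by (auto simp: mem_box_cart) (metis Abs_wo_copy_inverse Rep_wo_copy_inverse UNIV_I)+
  then have "emeasure (distr lborel borel from_wo_copy) (box l u) =
      emeasure lborel (box (to_wo_copy l) (to_wo_copy u))"
    using borel_measurable_from_wo_copy by (subst emeasure_distr) auto
  also have "\<dots> = (\<Prod>b\<in>Basis. (to_wo_copy u - to_wo_copy l) \<bullet> b)"
    using lu by (intro emeasure_lborel_box) (auto simp: Basis_vec_def inner_axis)
  also have "\<dots> = (\<Prod>b\<in>Basis. (u - l) \<bullet> b)"
    using prod.reindex_bij_betw[OF bij_Rep_wo_copy, of "\<lambda>c. (u - l) $ c"] by (simp add: prod_Basis_vec)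
  finally show "emeasure (distr lborel borel from_wo_copy) (box l u) = (\<Prod>b\<in>Basis. (u - l) \<bullet> b)" .
qed simp

lemma measure_to_wo_copy:
  fixes S :: "(real ^ 'a::finite) set"
  assumes "S \<in> sets borel"
  shows "measure lborel (to_wo_copy ` S) = measure lborel S"
proof -
  have "measure lborel S = measure (distr lborel borel (from_wo_copy :: _ \<Rightarrow> real ^ 'a)) S"
    by (simp add: distr_from_wo_copy)
  also have "\<dots> = measure lborel (from_wo_copy -` S)"
    using assms borel_measurable_from_wo_copy by (subst measure_distr) auto
  also have "from_wo_copy -` S = to_wo_copy ` S"
    by (auto simp: image_iff) (metis to_from_wo_copy)
  finally show ?thesis
    by simp
qed

lemma abs_det_eq_1_if_integral_inverse:
  fixes A B :: "real ^ 'm::finite ^ 'm"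
  assumes "B ** A = mat 1" and "\<And>i j. A $ i $ j \<in> \<int>" and "\<And>i j. B $ i $ j \<in> \<int>"
  shows "\<bar>det A\<bar> = 1"
proof -
  have "det A \<in> \<int>" "det B \<in> \<int>"
    unfolding det_def using assms(2,3) by (intro Ints_sum Ints_mult Ints_prod; simp)+
  then obtain a b where ab: "det A = of_int a" "det B = of_int b"
    by (metis Ints_cases)
  have "det B * det A = 1"
    using assms(1) by (metis det_I det_mul)
  then have "b * a = 1"
    unfolding ab by (metis of_int_eq_1_iff of_int_mult)
  then show ?thesis
    using ab zmult_eq_1_iff by auto
qed

lemma measure_unimodular_simplex_wellorder:
  fixes f g :: "'m::{finite,wellorder} \<Rightarrow> (real, 'm) vec"
  assumes dual: "\<And>k i. g k \<bullet> f i = (if k = i then 1 else 0)"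
    and f_Ints: "\<And>i c. f i $ c \<in> \<int>" and g_Ints: "\<And>k c. g k $ c \<in> \<int>"
  shows "measure lborel (convex hull (insert 0 (range f))) = 1 / fact CARD('m)"
proof -
  note indep = affine_independent_insert_0_if_dual[of UNIV g f, OF dual]
  define M where "M = (\<chi> i. \<chi> j. f j $ i - (0 :: (real, 'm) vec) $ i)"
  have "measure lborel (convex hull (insert 0 (range f))) = \<bar>det M\<bar> / fact CARD('m)"
    unfolding M_def using indep(1,2)
    by (intro content_simplex) (auto simp: card_image bij_betw_def)
  moreover have "\<bar>det M\<bar> = 1"
  proof (rule abs_det_eq_1_if_integral_inverse)
    show "(\<chi> i. \<chi> k. g i $ k) ** M = mat 1"
      by (simp add: vec_eq_iff matrix_matrix_mult_def M_def mat_def inner_vec_def mult.commute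
          flip: dual)
  qed (simp_all add: M_def f_Ints g_Ints)
  ultimately show ?thesis
    by simp
qed

lemma measure_unimodular_simplex:
  fixes f g :: "'i \<Rightarrow> real ^ 'm::{finite,linorder}"
  assumes I: "finite I" "card I = CARD('m)"
    and dual: "\<And>k i. k \<in> I \<Longrightarrow> i \<in> I \<Longrightarrow> g k \<bullet> f i = (if k = i then 1 else 0)"
    and f_Ints: "\<And>i c. i \<in> I \<Longrightarrow> f i $ c \<in> \<int>" and g_Ints: "\<And>k c. k \<in> I \<Longrightarrow> g k $ c \<in> \<int>"
  shows "measure lborel (convex hull (insert 0 (f ` I))) = 1 / fact CARD('m)"
proof -
  obtain \<sigma> :: "'m wo_copy \<Rightarrow> 'i" where \<sigma>: "bij_betw \<sigma> UNIV I"
    using finite_same_card_bij[of "UNIV :: 'm wo_copy set" I] I by (auto simp: card_wo_copy)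
  then have \<sigma>_I: "\<sigma> c \<in> I" and \<sigma>_inj: "\<sigma> c = \<sigma> c' \<longleftrightarrow> c = c'" for c c'
    by (auto simp: bij_betw_def inj_eq)
  have "measure lborel (convex hull (insert 0 (range (to_wo_copy \<circ> f \<circ> \<sigma>)))) = 1 / fact CARD('m wo_copy)"
  proof (rule measure_unimodular_simplex_wellorder)
    show "(to_wo_copy \<circ> g \<circ> \<sigma>) k \<bullet> (to_wo_copy \<circ> f \<circ> \<sigma>) i = (if k = i then 1 else 0)" for k i
      using dual[OF \<sigma>_I \<sigma>_I] \<sigma>_inj by (simp add: inner_to_wo_copy)
  qed (simp_all add: f_Ints g_Ints \<sigma>_I)
  moreover have "range (to_wo_copy \<circ> f \<circ> \<sigma>) = to_wo_copy ` f ` I"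
    using \<sigma> by (auto simp: bij_betw_def image_comp)
  moreover have "convex hull (insert 0 (to_wo_copy ` f ` I)) = to_wo_copy ` (convex hull (insert 0 (f ` I)))"
    using convex_hull_linear_image[OF linear_to_wo_copy] linear_0[OF linear_to_wo_copy] by (metis image_insert)
  moreover have "convex hull (insert 0 (f ` I)) \<in> sets borel"
    using I(1) by (intro borel_closed compact_imp_closed finite_imp_compact_convex_hull) simp
  ultimately show ?thesis
    by (simp add: measure_to_wo_copy card_wo_copy)
qed

section \<open>Coordinates and the roots of the cycle\<close>

lemma bij_betw_cidx: "bij_betw (cidx :: nat \<Rightarrow> 'n::{finite,linorder}) {1..CARD('n)} UNIV"
proof -
  let ?xs = "sorted_list_of_set (UNIV :: 'n set)"
  have "bij_betw ((!) ?xs) {..<CARD('n)} UNIV"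
    using bij_betw_nth[of ?xs] by simp
  moreover have "bij_betw (\<lambda>k. k - 1) {1..CARD('n)} {..<CARD('n)}"
    by (rule bij_betw_byWitness[where f'=Suc]) auto
  moreover have "cidx = (!) ?xs \<circ> (\<lambda>k. k - 1)"
    by (auto simp: cidx_def fun_eq_iff)
  ultimately show ?thesis
    using bij_betw_trans by metis
qed

definition idx :: "'n::{finite,linorder} \<Rightarrow> nat" where
  "idx = inv_into {1..CARD('n)} cidx"

lemma idx_cidx: "k \<in> {1..CARD('n)} \<Longrightarrow> idx (cidx k :: 'n::{finite,linorder}) = k"
  unfolding idx_def by (metis bij_betw_cidx bij_betw_def inv_into_f_f)

lemma ev_0 [simp]: "ev 0 = 0"
  by (simp add: ev_def)

lemma ev_Suc_CARD [simp]: "(ev (Suc CARD('n)) :: real ^ 'n::{finite,linorder}) = 0"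
  by (simp add: ev_def)

lemma inner_ev:
  "x \<bullet> (ev k :: real ^ 'n::{finite,linorder}) = (if 1 \<le> k \<and> k \<le> CARD('n) then x $ cidx k else 0)"
  by (simp add: ev_def inner_axis)

lemma ev_component_Ints: "ev k $ c \<in> \<int>"
  by (simp add: ev_def axis_def)

definition edge_vec :: "nat \<Rightarrow> real ^ 'n::{finite,linorder}" where
  "edge_vec i = ev (i - 1) - ev i"

lemma sum_edge_vec: "(\<Sum>i=1..CARD('n)+1. edge_vec i) = (0 :: real ^ 'n::{finite,linorder})"
proof -
  have "(\<Sum>i=1..CARD('n)+1. edge_vec i) = (\<Sum>i=0..CARD('n). edge_vec (Suc i) :: (real, 'n) vec)"
    by (metis Suc_eq_plus1 One_nat_def sum.shift_bounds_cl_Suc_ivl)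
  also have "\<dots> = - (\<Sum>i=0..CARD('n). ev (Suc i) - ev i)"
    by (simp add: edge_vec_def sum_negf[symmetric])
  also have "\<dots> = 0"
    by (subst sum_Suc_diff) auto
  finally show ?thesis .
qed

lemma mem_cyc_roots_iff:
  "r \<in> (cyc_roots :: (real ^ 'n::{finite,linorder}) set) \<longleftrightarrow>
     (\<exists>i\<in>{1..CARD('n)+1}. r = edge_vec i \<or> r = - edge_vec i)"
proof -
  let ?N = "CARD('n) + 1"
  have distinct_ends: "i - 1 \<noteq> i mod ?N" if "i \<in> {1..?N}" for i
    using that zero_less_card_finite[where 'a='n] by (cases "i = ?N") auto
  have edge: "cyc_edge ?N a b \<longleftrightarrow> (\<exists>i\<in>{1..?N}. (a, b) = (i - 1, i mod ?N) \<or> (b, a) = (i - 1, i mod ?N))"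
    for a b
  proof
    show "\<exists>i\<in>{1..?N}. (a, b) = (i - 1, i mod ?N) \<or> (b, a) = (i - 1, i mod ?N)"
      if "cyc_edge ?N a b"
      using that unfolding cyc_edge_def by (auto intro: bexI[of _ "Suc a"] bexI[of _ "Suc b"])
    show "cyc_edge ?N a b" if "\<exists>i\<in>{1..?N}. (a, b) = (i - 1, i mod ?N) \<or> (b, a) = (i - 1, i mod ?N)"
      using that distinct_ends unfolding cyc_edge_def by (auto simp del: One_nat_def) (metis atLeastAtMost_iff)+
  qed
  have ev_mod: "ev (i mod ?N) = (ev i :: (real, 'n) vec)" if "i \<le> ?N" for i
    using that by (cases "i = ?N") auto
  show ?thesis
  proof
    assume "r \<in> cyc_roots"
    then show "\<exists>i\<in>{1..?N}. r = edge_vec i \<or> r = - edge_vec i"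
      unfolding cyc_roots_def edge using ev_mod by (auto simp: edge_vec_def)
  next
    assume "\<exists>i\<in>{1..?N}. r = edge_vec i \<or> r = - edge_vec i"
    then obtain i where i: "i \<in> {1..?N}" and "r = ev (i - 1) - ev (i mod ?N) \<or> r = ev (i mod ?N) - ev (i - 1)"
      using ev_mod by (auto simp: edge_vec_def)
    then show "r \<in> cyc_roots"
      unfolding cyc_roots_def edge by blast
  qed
qed

lemma uminus_mem_cyc_roots: "r \<in> cyc_roots \<Longrightarrow> - r \<in> cyc_roots"
  by (auto simp: mem_cyc_roots_iff)

lemma cyc_roots_eq_image:
  "(cyc_roots :: (real ^ 'n::{finite,linorder}) set) =
     (\<lambda>(i, b). (if b then 1 else -1) *\<^sub>R edge_vec i) ` ({1..CARD('n)+1} \<times> UNIV)"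
  (is "_ = ?f ` ?I")
proof (intro equalityI subsetI)
  fix r :: "(real, 'n) vec" assume "r \<in> cyc_roots"
  then obtain i where "i \<in> {1..CARD('n)+1}" "r = ?f (i, True) \<or> r = ?f (i, False)"
    by (auto simp: mem_cyc_roots_iff)
  then show "r \<in> ?f ` ?I"
    by blast
next
  fix r assume "r \<in> ?f ` ?I"
  then obtain i b where "i \<in> {1..CARD('n)+1}" "r = ?f (i, b)"
    by blast
  then show "r \<in> cyc_roots"
    by (cases b) (auto simp: mem_cyc_roots_iff)
qed

lemma finite_cyc_roots: "finite (cyc_roots :: (real ^ 'n::{finite,linorder}) set)"
  by (simp add: cyc_roots_eq_image)

definition cycle_functional :: "(nat \<Rightarrow> real) \<Rightarrow> real ^ 'n::{finite,linorder}" where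
  "cycle_functional a = (\<chi> c. - (\<Sum>i=1..idx c. a i))"

lemma inner_cycle_functional_edge_vec:
  assumes "(\<Sum>i=1..CARD('n)+1. a i) = 0" and "i \<in> {1..CARD('n)+1}"
  shows "(cycle_functional a :: real ^ 'n::{finite,linorder}) \<bullet> edge_vec i = a i"
proof -
  have inner_ev_k: "(cycle_functional a :: (real, 'n) vec) \<bullet> ev k = - (\<Sum>i=1..k. a i)"
    if "k \<le> CARD('n) + 1" for k
    using that assms(1) idx_cidx[where 'n='n, of k]
    by (cases "k = CARD('n) + 1") (auto simp: inner_ev cycle_functional_def)
  obtain m where m: "i = Suc m"
    using assms(2) by (cases i) auto
  show ?thesis
    using assms(2) by (simp add: m edge_vec_def inner_diff_right inner_ev_k)
qed

lemma cycle_functional_Ints: "(\<And>i. a i \<in> \<int>) \<Longrightarrow> cycle_functional a $ c \<in> \<int>"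
  by (simp add: cycle_functional_def Ints_sum)

lemma edge_vec_nonzero:
  assumes "i \<in> {1..CARD('n)+1}"
  shows "(edge_vec i :: real ^ 'n::{finite,linorder}) \<noteq> 0"
proof -
  define j where "j = (if i = 1 then 2 else 1 :: nat)"
  define a :: "nat \<Rightarrow> real" where "a k = (if k = i then 1 else 0) - (if k = j then 1 else 0)" for k
  have "j \<in> {1..CARD('n)+1}" "j \<noteq> i"
    using assms zero_less_card_finite[where 'a='n] by (auto simp: j_def)
  then have "(\<Sum>k=1..CARD('n)+1. a k) = 0"
    using assms by (simp add: a_def sum_subtractf)
  then have "(cycle_functional a :: (real, 'n) vec) \<bullet> edge_vec i = 1"
    using assms \<open>j \<noteq> i\<close> by (simp add: inner_cycle_functional_edge_vec a_def)
  then show ?thesis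
    by auto
qed

lemma zero_notin_cyc_roots: "0 \<notin> (cyc_roots :: (real ^ 'n::{finite,linorder}) set)"
  using edge_vec_nonzero by (force simp: mem_cyc_roots_iff)

section \<open>The simplices \<open>G\<^sup>0\<^sub>\<lambda>\<close>\<close>

lemma Lam_values: "lam \<in> Lam j N \<Longrightarrow> lam i \<in> {-1, 0, 1}"
  unfolding Lam_def by (cases "i \<in> {1..N} - {j}") auto

lemma Lam_nonzero: "lam \<in> Lam j N \<Longrightarrow> i \<in> {1..N} - {j} \<Longrightarrow> lam i \<in> {-1, 1}"
  unfolding Lam_def by auto

lemma Lam_at_j: "lam \<in> Lam j N \<Longrightarrow> lam j = 0"
  unfolding Lam_def by auto

lemma Lam_sum_real: "lam \<in> Lam j N \<Longrightarrow> (\<Sum>i=1..N. real_of_int (lam i)) = 0"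
  unfolding Lam_def by (metis (mono_tags, lifting) mem_Collect_eq of_int_0 of_int_sum)

definition vertex :: "(nat \<Rightarrow> int) \<Rightarrow> nat \<Rightarrow> real ^ 'n::{finite,linorder}" where
  "vertex lam i = of_int (lam i) *\<^sub>R edge_vec i"

abbreviation vertices :: "nat \<Rightarrow> (nat \<Rightarrow> int) \<Rightarrow> (real ^ 'n::{finite,linorder}) set" where
  "vertices j lam \<equiv> vertex lam ` ({1..CARD('n)+1} - {j})"

lemma G0_eq_vertices: "G0 j lam = convex hull (insert 0 (vertices j lam))"
  unfolding G0_def vertex_def edge_vec_def by (rule arg_cong[where f="\<lambda>S. convex hull (insert 0 S)"]) auto

lemma vertex_component_Ints: "vertex lam i $ c \<in> \<int>"
  by (simp add: vertex_def edge_vec_def ev_component_Ints Ints_diff Ints_mult)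

text \<open>The lower facet of the lifted polytope over \<open>G\<^sup>0\<^sub>\<lambda>\<close> has inner normal \<open>(-height \<lambda>, 1)\<close>.\<close>

definition height :: "(nat \<Rightarrow> int) \<Rightarrow> real ^ 'n::{finite,linorder}" where
  "height lam = cycle_functional (\<lambda>i. of_int (lam i))"

lemma inner_height_edge_vec:
  "lam \<in> Lam j (CARD('n)+1) \<Longrightarrow> i \<in> {1..CARD('n)+1} \<Longrightarrow>
     (height lam :: real ^ 'n::{finite,linorder}) \<bullet> edge_vec i = of_int (lam i)"
  unfolding height_def by (rule inner_cycle_functional_edge_vec) (auto dest: Lam_sum_real)

lemma top_cyc_roots:
  assumes lam: "lam \<in> Lam j (CARD('n)+1)"
    and h: "\<forall>i\<in>{1..CARD('n)+1}. (h :: real ^ 'n::{finite,linorder}) \<bullet> edge_vec i = of_int (lam i)"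
  shows "\<forall>r\<in>cyc_roots. h \<bullet> r \<le> 1"
    and "{r \<in> cyc_roots. h \<bullet> r = 1} = vertices j lam"
proof -
  have lam_i: "lam i \<in> {-1, 0, 1}" for i
    using Lam_values[OF lam] .
  show "\<forall>r\<in>cyc_roots. h \<bullet> r \<le> 1"
  proof
    fix r :: "(real, 'n) vec" assume "r \<in> cyc_roots"
    then obtain i where "i \<in> {1..CARD('n)+1}" and "r = edge_vec i \<or> r = - edge_vec i"
      by (auto simp: mem_cyc_roots_iff)
    then show "h \<bullet> r \<le> 1"
      using h lam_i[of i] by auto
  qed
  show "{r \<in> cyc_roots. h \<bullet> r = 1} = vertices j lam"
  proof (intro equalityI subsetI)
    fix r :: "(real, 'n) vec" assume "r \<in> {r \<in> cyc_roots. h \<bullet> r = 1}"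
    then obtain i where i: "i \<in> {1..CARD('n)+1}" and r: "r = edge_vec i \<or> r = - edge_vec i"
      and "h \<bullet> r = 1"
      by (auto simp: mem_cyc_roots_iff)
    then have "lam i = (if r = edge_vec i then 1 else -1)"
      using h lam_i[of i] by auto
    moreover from this have "i \<noteq> j"
      using Lam_at_j[OF lam] by (auto split: if_splits)
    ultimately have "r = vertex lam i" and "i \<in> {1..CARD('n)+1} - {j}"
      using i r by (auto simp: vertex_def)
    then show "r \<in> vertices j lam"
      by blast
  next
    fix r :: "(real, 'n) vec" assume "r \<in> vertices j lam"
    then obtain i where i: "i \<in> {1..CARD('n)+1} - {j}" and r: "r = vertex lam i"
      by blast
    have "lam i \<in> {-1, 1}"
      using Lam_nonzero[OF lam i] .
    then have "r = edge_vec i \<or> r = - edge_vec i" and "h \<bullet> r = 1"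
      using h i by (auto simp: r vertex_def)
    then show "r \<in> {r \<in> cyc_roots. h \<bullet> r = 1}"
      using i by (auto simp: mem_cyc_roots_iff)
  qed
qed

lemma top_cyc_roots_height:
  assumes "lam \<in> Lam j (CARD('n)+1)"
  shows "\<forall>r\<in>cyc_roots. (height lam :: real ^ 'n::{finite,linorder}) \<bullet> r \<le> 1"
    and "{r \<in> cyc_roots. (height lam :: (real, 'n) vec) \<bullet> r = 1} = vertices j lam"
  using top_cyc_roots[OF assms] inner_height_edge_vec[OF assms] by blast+

lemma vertices_subset_cyc_roots:
  "lam \<in> Lam j (CARD('n)+1) \<Longrightarrow> vertices j lam \<subseteq> (cyc_roots :: (real ^ 'n::{finite,linorder}) set)"
  using top_cyc_roots_height(2) by blast

lemma vertex_dual_basis: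
  assumes lam: "lam \<in> Lam j (CARD('n)+1)" and j: "j \<in> {1..CARD('n)+1}"
  obtains g :: "nat \<Rightarrow> real ^ 'n::{finite,linorder}"
  where "\<And>k c. g k $ c \<in> \<int>"
    and "\<And>k i. k \<in> {1..CARD('n)+1} - {j} \<Longrightarrow> i \<in> {1..CARD('n)+1} - {j} \<Longrightarrow>
           g k \<bullet> vertex lam i = (if k = i then 1 else 0)"
proof
  define a :: "nat \<Rightarrow> nat \<Rightarrow> real" where
    "a k i = (if i = k then 1 else 0) - (if i = j then 1 else 0)" for k i
  define g :: "nat \<Rightarrow> (real, 'n) vec" where "g k = of_int (lam k) *\<^sub>R cycle_functional (a k)" for k
  show "g k $ c \<in> \<int>" for k c
    by (simp add: g_def a_def cycle_functional_Ints)
  fix k i assume k: "k \<in> {1..CARD('n)+1} - {j}" and i: "i \<in> {1..CARD('n)+1} - {j}"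
  have "(\<Sum>i=1..CARD('n)+1. a k i) = 0"
    using j k by (simp add: a_def sum_subtractf)
  moreover have "lam k * lam k = 1"
    using Lam_nonzero[OF lam k] by auto
  ultimately show "g k \<bullet> vertex lam i = (if k = i then 1 else 0)"
    using i by (auto simp: g_def vertex_def inner_cycle_functional_edge_vec a_def simp flip: of_int_mult)
qed

lemma G0_simplex:
  assumes lam: "lam \<in> Lam j (CARD('n)+1)" and j: "j \<in> {1..CARD('n)+1}"
  shows "\<not> affine_dependent (insert 0 (vertices j lam :: (real ^ 'n::{finite,linorder}) set))"
    and "card (insert 0 (vertices j lam :: (real, 'n) vec set)) = CARD('n) + 1"
proof -
  obtain g :: "nat \<Rightarrow> (real, 'n) vec" where
    "\<And>k i. k \<in> {1..CARD('n)+1} - {j} \<Longrightarrow> i \<in> {1..CARD('n)+1} - {j} \<Longrightarrow>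
       g k \<bullet> vertex lam i = (if k = i then 1 else 0)"
    using vertex_dual_basis[OF lam j] by metis
  note indep = affine_independent_insert_0_if_dual[where I = "{1..CARD('n)+1} - {j}" and v = "vertex lam", OF this]
  show "\<not> affine_dependent (insert 0 (vertices j lam :: (real, 'n) vec set))"
    using indep(3) .
  show "card (insert 0 (vertices j lam :: (real, 'n) vec set)) = CARD('n) + 1"
    using indep(1,2) j by (simp add: card_image)
qed

lemma aff_dim_G0:
  assumes "lam \<in> Lam j (CARD('n)+1)" and "j \<in> {1..CARD('n)+1}"
  shows "aff_dim (G0 j lam :: (real ^ 'n::{finite,linorder}) set) = CARD('n)"
  using aff_dim_affine_independent[OF G0_simplex(1)[OF assms]] G0_simplex(2)[OF assms]
  by (simp add: G0_eq_vertices aff_dim_convex_hull)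

lemma sum_vertex_mem_G0:
  assumes lam: "lam \<in> Lam j (CARD('n)+1)"
    and t: "\<forall>i\<in>{1..CARD('n)+1}. 0 \<le> t i" "sum t {1..CARD('n)+1} \<le> 1"
  shows "(\<Sum>i=1..CARD('n)+1. t i *\<^sub>R vertex lam i) \<in> (G0 j lam :: (real ^ 'n::{finite,linorder}) set)"
proof -
  have "vertex lam j = 0"
    using Lam_at_j[OF lam] by (simp add: vertex_def)
  moreover have "vertex lam ` {1..CARD('n)+1} \<subseteq> insert (vertex lam j) (vertices j lam :: (real, 'n) vec set)"
    by blast
  ultimately have "G0 j lam = convex hull (insert 0 (vertex lam ` {1..CARD('n)+1}) :: (real, 'n) vec set)"
    unfolding G0_eq_vertices by (intro arg_cong[where f="\<lambda>S. convex hull S"]) auto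
  also have "\<dots> = {\<Sum>i=1..CARD('n)+1. t i *\<^sub>R vertex lam i | t.
      (\<forall>i\<in>{1..CARD('n)+1}. 0 \<le> t i) \<and> sum t {1..CARD('n)+1} \<le> 1}"
    by (rule convex_hull_insert_0_image) simp
  finally show ?thesis
    using t by (auto simp del: sum.cl_ivl_Suc)
qed

section \<open>Triangulation\<close>

text \<open>Take \<open>s\<^sub>j\<close> a median; the indices above it get \<open>\<lambda>\<^sub>i = 1\<close>, those below \<open>\<lambda>\<^sub>i = -1\<close>, and ties
  are split so that both classes have the same size.\<close>

lemma Lam_sign_pattern_at_median:
  fixes s :: "nat \<Rightarrow> real"
  assumes "odd N"
  obtains j lam where "j \<in> {1..N}" "lam \<in> Lam j N"
    "\<And>i. i \<in> {1..N} \<Longrightarrow> of_int (lam i) * (s i - s j) = \<bar>s i - s j\<bar>"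
proof -
  define m where "m = N div 2"
  define xs where "xs = sort_key s [1..<N+1]"
  have xs: "distinct xs" "set xs = {1..N}" "length xs = 2 * m + 1" "sorted (map s xs)"
    using assms by (auto simp: xs_def m_def)
  define j where "j = xs ! m"
  define lo where "lo = set (take m xs)"
  define hi where "hi = set (drop (Suc m) xs)"
  have split: "xs = take m xs @ j # drop (Suc m) xs"
    using id_take_nth_drop[of m xs] xs(3) by (simp add: j_def)
  then have "distinct (take m xs @ j # drop (Suc m) xs)"
    using xs(1) by simp
  then have disj: "j \<notin> lo" "j \<notin> hi" "lo \<inter> hi = {}" and card: "card lo = m" "card hi = m"
    using xs(3) by (auto simp: lo_def hi_def distinct_card)
  have N: "{1..N} = insert j (lo \<union> hi)"
    using arg_cong[OF split, of set] xs(2) by (auto simp: lo_def hi_def)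
  have "sorted (map s (take m xs @ j # drop (Suc m) xs))"
    using xs(4) split by metis
  then have lo_le: "\<forall>i\<in>lo. s i \<le> s j" and hi_ge: "\<forall>i\<in>hi. s j \<le> s i"
    by (auto simp: lo_def hi_def sorted_append)
  define lam :: "nat \<Rightarrow> int" where "lam i = (if i \<in> hi then 1 else if i \<in> lo then -1 else 0)" for i
  have "(\<Sum>i\<in>hi. lam i) = (\<Sum>i\<in>hi. 1)" "(\<Sum>i\<in>lo. lam i) = (\<Sum>i\<in>lo. -1)"
    by (rule sum.cong; use disj in \<open>auto simp: lam_def\<close>)+
  moreover have "lam j = 0"
    using disj by (simp add: lam_def)
  ultimately have "(\<Sum>i=1..N. lam i) = 0"
    unfolding N using disj card by (simp add: sum.union_disjoint lo_def hi_def)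
  then have "lam \<in> Lam j N"
    using disj N by (auto simp: Lam_def lam_def)
  moreover have "of_int (lam i) * (s i - s j) = \<bar>s i - s j\<bar>" if "i \<in> {1..N}" for i
    using that N disj lo_le hi_ge by (auto simp: lam_def)
  moreover have "j \<in> {1..N}"
    using N by blast
  ultimately show ?thesis
    using that by blast
qed

lemma P_C_edge_vec_combination:
  assumes "x \<in> (P_C :: (real ^ 'n::{finite,linorder}) set)"
  obtains s where "(\<Sum>i=1..CARD('n)+1. \<bar>s i\<bar>) \<le> 1" and "x = (\<Sum>i=1..CARD('n)+1. s i *\<^sub>R edge_vec i)"
proof -
  let ?N = "{1..CARD('n)+1}"
  note sum.cl_ivl_Suc [simp del]
  define f :: "nat \<times> bool \<Rightarrow> (real, 'n) vec" where
    "f = (\<lambda>(i, b). (if b then 1 else -1) *\<^sub>R edge_vec i)"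
  have "cyc_roots = f ` (?N \<times> UNIV)"
    unfolding f_def by (rule cyc_roots_eq_image)
  then have "x \<in> convex hull (insert 0 (f ` (?N \<times> UNIV)))"
    using assms hull_mono[of cyc_roots "insert 0 cyc_roots"] by (auto simp: P_C_def)
  then obtain t where t: "\<forall>p\<in>?N \<times> UNIV. 0 \<le> t p" "sum t (?N \<times> UNIV) \<le> 1"
    and x: "x = (\<Sum>p\<in>?N \<times> UNIV. t p *\<^sub>R f p)"
    by (subst (asm) convex_hull_insert_0_image) auto
  define s where "s i = t (i, True) - t (i, False)" for i
  show ?thesis
  proof
    have "(\<Sum>i\<in>?N. \<bar>s i\<bar>) \<le> (\<Sum>i\<in>?N. t (i, True) + t (i, False))"
    proof (rule sum_mono)
      fix i assume "i \<in> ?N"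
      then have "0 \<le> t (i, True)" "0 \<le> t (i, False)"
        using t(1) by auto
      then show "\<bar>s i\<bar> \<le> t (i, True) + t (i, False)"
        by (simp add: s_def abs_le_iff)
    qed
    also have "\<dots> = sum t (?N \<times> UNIV)"
      by (simp add: sum.cartesian_product' UNIV_bool add.commute)
    finally show "(\<Sum>i\<in>?N. \<bar>s i\<bar>) \<le> 1"
      using t(2) by simp
    show "x = (\<Sum>i\<in>?N. s i *\<^sub>R edge_vec i)"
      by (simp add: x sum.cartesian_product' UNIV_bool f_def s_def scaleR_diff_left)
  qed
qed

lemma P_C_covered:
  assumes odd: "odd (CARD('n) + 1)" and x: "x \<in> (P_C :: (real ^ 'n::{finite,linorder}) set)"
  obtains j lam where "j \<in> {1..CARD('n)+1}" "lam \<in> Lam j (CARD('n)+1)" "x \<in> G0 j lam"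
proof -
  let ?N = "{1..CARD('n)+1}"
  note sum.cl_ivl_Suc [simp del]
  obtain s where s: "(\<Sum>i\<in>?N. \<bar>s i\<bar>) \<le> 1" and x: "x = (\<Sum>i\<in>?N. s i *\<^sub>R edge_vec i)"
    using P_C_edge_vec_combination[OF assms(2)] by blast
  obtain j lam where j: "j \<in> ?N" and lam: "lam \<in> Lam j (CARD('n)+1)"
    and sign: "\<And>i. i \<in> ?N \<Longrightarrow> of_int (lam i) * (s i - s j) = \<bar>s i - s j\<bar>"
    using Lam_sign_pattern_at_median[OF odd] by metis
  define t where "t i = \<bar>s i - s j\<bar>" for i
  have "(\<Sum>i\<in>?N. s j *\<^sub>R edge_vec i) = (0 :: (real, 'n) vec)"
    using sum_edge_vec[where 'n='n] by (simp flip: scaleR_sum_right)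
  then have "x = (\<Sum>i\<in>?N. (s i - s j) *\<^sub>R edge_vec i)"
    by (simp add: x scaleR_diff_left sum_subtractf)
  also have "\<dots> = (\<Sum>i\<in>?N. t i *\<^sub>R vertex lam i)"
  proof (rule sum.cong)
    fix i assume i: "i \<in> ?N"
    have "s i - s j = of_int (lam i) * t i"
      using sign[OF i] Lam_values[OF lam, of i] by (auto simp: t_def)
    then show "(s i - s j) *\<^sub>R edge_vec i = t i *\<^sub>R vertex lam i"
      by (simp add: vertex_def)
  qed simp
  finally have x_t: "x = (\<Sum>i\<in>?N. t i *\<^sub>R vertex lam i)" .
  have "(\<Sum>i\<in>?N. t i) = (\<Sum>i\<in>?N. of_int (lam i) * (s i - s j))"
    by (simp add: t_def sign)
  also have "\<dots> = (\<Sum>i\<in>?N. of_int (lam i) * s i) - s j * (\<Sum>i\<in>?N. of_int (lam i))"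
    by (simp add: algebra_simps sum_subtractf sum_distrib_left)
  also have "\<dots> \<le> (\<Sum>i\<in>?N. \<bar>s i\<bar>)"
  proof -
    have "of_int (lam i) * s i \<le> \<bar>s i\<bar>" for i
      using Lam_values[OF lam, of i] by auto
    then show ?thesis
      using Lam_sum_real[OF lam] by (simp add: sum_mono)
  qed
  finally have "sum t ?N \<le> 1"
    using s by simp
  then have "x \<in> G0 j lam"
    unfolding x_t by (intro sum_vertex_mem_G0[OF lam]) (auto simp: t_def)
  with j lam show ?thesis
    using that by blast
qed

lemma zero_in_P_C: "0 \<in> (P_C :: (real ^ 'n::{finite,linorder}) set)"
proof -
  have "edge_vec 1 \<in> (cyc_roots :: (real, 'n) vec set)" "- edge_vec 1 \<in> (cyc_roots :: (real, 'n) vec set)"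
    by (auto simp: mem_cyc_roots_iff)
  then have "(1/2) *\<^sub>R edge_vec 1 + (1/2) *\<^sub>R (- edge_vec 1) \<in> (P_C :: (real, 'n) vec set)"
    unfolding P_C_def by (intro convexD[OF convex_convex_hull] hull_inc) auto
  then show ?thesis
    by simp
qed

lemma G0_subset_P_C:
  assumes "lam \<in> Lam j (CARD('n)+1)"
  shows "G0 j lam \<subseteq> (P_C :: (real ^ 'n::{finite,linorder}) set)"
proof -
  have "insert 0 (vertices j lam) \<subseteq> (P_C :: (real, 'n) vec set)"
    using zero_in_P_C vertices_subset_cyc_roots[OF assms] hull_subset[of "cyc_roots :: (real, 'n) vec set"]
    unfolding P_C_def by auto
  then show ?thesis
    unfolding G0_eq_vertices by (rule hull_minimal) (simp add: P_C_def)
qed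

lemma height_dominates_on_vertices:
  assumes lam: "lam \<in> Lam j (CARD('n)+1)" and mu: "mu \<in> Lam k (CARD('n)+1)"
    and v: "v \<in> insert 0 (vertices j lam :: (real ^ 'n::{finite,linorder}) set)"
  shows "height mu \<bullet> v \<le> height lam \<bullet> v"
    and "height mu \<bullet> v = height lam \<bullet> v \<Longrightarrow> v \<in> insert 0 (vertices k mu)"
proof -
  have v_cases: "v = 0 \<or> v \<in> cyc_roots \<and> height lam \<bullet> v = 1"
    using v top_cyc_roots_height(2)[OF lam] by blast
  then show "height mu \<bullet> v \<le> height lam \<bullet> v"
    using top_cyc_roots_height(1)[OF mu] by auto
  show "v \<in> insert 0 (vertices k mu)" if "height mu \<bullet> v = height lam \<bullet> v"
    using v_cases that top_cyc_roots_height(2)[OF mu] by auto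
qed

lemma height_dominates_on_G0:
  assumes lam: "lam \<in> Lam j (CARD('n)+1)" and mu: "mu \<in> Lam k (CARD('n)+1)"
    and x: "x \<in> (G0 j lam :: (real ^ 'n::{finite,linorder}) set)"
  shows "height mu \<bullet> x \<le> height lam \<bullet> x"
proof -
  have "convex {x :: (real, 'n) vec. height mu \<bullet> x \<le> height lam \<bullet> x}"
    using convex_halfspace_le[of "height mu - height lam" 0] by (simp add: inner_diff_left)
  then have "G0 j lam \<subseteq> {x :: (real, 'n) vec. height mu \<bullet> x \<le> height lam \<bullet> x}"
    unfolding G0_eq_vertices using height_dominates_on_vertices(1)[OF lam mu]
    by (intro hull_minimal) auto
  then show ?thesis
    using x by blast
qed

lemma G0_Int_G0_face_of:
  assumes lam: "lam \<in> Lam j (CARD('n)+1)" and mu: "mu \<in> Lam k (CARD('n)+1)"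
  shows "G0 j lam \<inter> G0 k mu face_of (G0 j lam :: (real ^ 'n::{finite,linorder}) set)"
proof -
  define u :: "(real, 'n) vec" where "u = height lam - height mu"
  have "G0 j lam \<inter> {x. u \<bullet> x = 0} = convex hull {v \<in> insert 0 (vertices j lam). u \<bullet> v = 0}"
    unfolding G0_eq_vertices u_def using height_dominates_on_vertices(1)[OF lam mu]
    by (intro convex_hull_Int_supporting_hyperplane finite_imp_compact) (auto simp: inner_diff_left)
  also have "\<dots> \<subseteq> G0 k mu"
    unfolding G0_eq_vertices
  proof (rule hull_mono, rule subsetI)
    fix v assume "v \<in> {v \<in> insert 0 (vertices j lam). u \<bullet> v = 0}"
    then show "v \<in> insert 0 (vertices k mu)"
      using height_dominates_on_vertices(2)[OF lam mu, of v] by (simp add: u_def inner_diff_left)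
  qed
  finally have "G0 j lam \<inter> {x. u \<bullet> x = 0} \<subseteq> G0 k mu" .
  moreover have "u \<bullet> x = 0" if "x \<in> G0 j lam" "x \<in> G0 k mu" for x
    using height_dominates_on_G0[OF lam mu that(1)] height_dominates_on_G0[OF mu lam that(2)]
    by (simp add: u_def inner_diff_left)
  ultimately have "G0 j lam \<inter> {x. u \<bullet> x = 0} = G0 j lam \<inter> G0 k mu"
    by blast
  moreover have "G0 j lam \<inter> {x. u \<bullet> x = 0} face_of G0 j lam"
    using height_dominates_on_G0[OF lam mu]
    by (intro face_of_Int_supporting_hyperplane_ge) (auto simp: G0_def u_def inner_diff_left)
  ultimately show ?thesis
    by simp
qed

lemma Delta_cases:
  assumes "T \<in> (Delta :: (real ^ 'n::{finite,linorder}) set set)"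
  obtains j lam where "j \<in> {1..CARD('n)+1}" "lam \<in> Lam j (CARD('n)+1)" "T = G0 j lam"
  using assms unfolding Delta_def by blast

lemma finite_Delta: "finite (Delta :: (real ^ 'n::{finite,linorder}) set set)"
proof (rule finite_subset)
  show "Delta \<subseteq> (\<lambda>V. convex hull (insert 0 V)) ` Pow (cyc_roots :: (real, 'n) vec set)"
  proof
    fix T :: "(real, 'n) vec set" assume "T \<in> Delta"
    then obtain j lam where lam: "lam \<in> Lam j (CARD('n)+1)" and T: "T = G0 j lam"
      by (rule Delta_cases)
    show "T \<in> (\<lambda>V. convex hull (insert 0 V)) ` Pow cyc_roots"
      unfolding T G0_eq_vertices using vertices_subset_cyc_roots[OF lam] by blast
  qed
qed (simp add: finite_cyc_roots)

lemma Union_Delta: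
  assumes "odd (CARD('n) + 1)"
  shows "\<Union> Delta = (P_C :: (real ^ 'n::{finite,linorder}) set)"
proof
  show "\<Union> Delta \<subseteq> (P_C :: (real, 'n) vec set)"
  proof
    fix x :: "(real, 'n) vec" assume "x \<in> \<Union> Delta"
    then obtain T where "T \<in> Delta" "x \<in> T"
      by blast
    moreover obtain j lam where "lam \<in> Lam j (CARD('n)+1)" "T = G0 j lam"
      using \<open>T \<in> Delta\<close> by (rule Delta_cases)
    ultimately show "x \<in> P_C"
      using G0_subset_P_C by blast
  qed
  show "P_C \<subseteq> \<Union> (Delta :: (real, 'n) vec set set)"
  proof
    fix x :: "(real, 'n) vec" assume "x \<in> P_C"
    then obtain j lam where "j \<in> {1..CARD('n)+1}" "lam \<in> Lam j (CARD('n)+1)" "x \<in> G0 j lam"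
      using P_C_covered[OF assms] by metis
    then show "x \<in> \<Union> Delta"
      unfolding Delta_def by blast
  qed
qed

lemma is_triangulation_Delta:
  assumes "odd (CARD('n) + 1)"
  shows "is_triangulation (Delta :: (real ^ 'n::{finite,linorder}) set set) P_C"
  unfolding is_triangulation_def
proof (intro conjI ballI)
  show "finite (Delta :: (real, 'n) vec set set)"
    by (rule finite_Delta)
  show "int CARD('n) simplex T" if "T \<in> Delta" for T :: "(real, 'n) vec set"
  proof -
    obtain j lam where j: "j \<in> {1..CARD('n)+1}" and lam: "lam \<in> Lam j (CARD('n)+1)"
      and T: "T = G0 j lam"
      using \<open>T \<in> Delta\<close> by (rule Delta_cases)
    show ?thesis
      unfolding T G0_eq_vertices using G0_simplex[OF lam j] by (simp add: simplex_convex_hull)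
  qed
  show "\<Union> Delta = (P_C :: (real, 'n) vec set)"
    by (rule Union_Delta[OF assms])
  show "T1 \<inter> T2 face_of T1" "T1 \<inter> T2 face_of T2" if "T1 \<in> Delta" "T2 \<in> Delta"
    for T1 T2 :: "(real, 'n) vec set"
  proof -
    obtain j lam where lam: "lam \<in> Lam j (CARD('n)+1)" and T1: "T1 = G0 j lam"
      using \<open>T1 \<in> Delta\<close> by (rule Delta_cases)
    obtain k mu where mu: "mu \<in> Lam k (CARD('n)+1)" and T2: "T2 = G0 k mu"
      using \<open>T2 \<in> Delta\<close> by (rule Delta_cases)
    show "T1 \<inter> T2 face_of T1"
      unfolding T1 T2 by (rule G0_Int_G0_face_of[OF lam mu])
    show "T1 \<inter> T2 face_of T2"
      unfolding T1 T2 Int_commute[of "G0 j lam"] by (rule G0_Int_G0_face_of[OF mu lam])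
  qed
qed

section \<open>Unimodularity\<close>

lemma measure_G0:
  assumes lam: "lam \<in> Lam j (CARD('n)+1)" and j: "j \<in> {1..CARD('n)+1}"
  shows "measure lborel (G0 j lam :: (real ^ 'n::{finite,linorder}) set) = 1 / fact CARD('n)"
proof -
  obtain g :: "nat \<Rightarrow> (real, 'n) vec" where
    g_Ints: "\<And>k c. g k $ c \<in> \<int>" and
    dual: "\<And>k i. k \<in> {1..CARD('n)+1} - {j} \<Longrightarrow> i \<in> {1..CARD('n)+1} - {j} \<Longrightarrow>
       g k \<bullet> vertex lam i = (if k = i then 1 else 0)"
    using vertex_dual_basis[OF lam j] by metis
  show ?thesis
    unfolding G0_eq_vertices
  proof (rule measure_unimodular_simplex[where I = "{1..CARD('n)+1} - {j}" and g = g])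
    show "card ({1..CARD('n)+1} - {j}) = CARD('n)"
      using j by simp
  qed (simp_all add: dual g_Ints vertex_component_Ints)
qed

lemma unimodular_Delta: "unimodular (Delta :: (real ^ 'n::{finite,linorder}) set set)"
  unfolding unimodular_def
proof (intro ballI conjI)
  fix T :: "(real, 'n) vec set" assume "T \<in> Delta"
  then obtain j lam where j: "j \<in> {1..CARD('n)+1}" and lam: "lam \<in> Lam j (CARD('n)+1)"
    and T: "T = G0 j lam"
    by (rule Delta_cases)
  have "\<forall>v \<in> insert 0 (vertices j lam :: (real, 'n) vec set). lattice_point v"
    by (auto simp: lattice_point_def vertex_component_Ints)
  then show "lattice_simplex T"
    unfolding lattice_simplex_def T G0_eq_vertices using G0_simplex[OF lam j] by blast
  show "normalized_volume T = 1"
    by (simp add: normalized_volume_def T measure_G0[OF lam j])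
qed

section \<open>Regularity\<close>

abbreviation Q_C :: "((real ^ 'n::{finite,linorder}) \<times> real) set" where
  "Q_C \<equiv> lifted S_C (\<lambda>a. if a = 0 then 0 else 1)"

lemma Q_C_eq:
  "(Q_C :: ((real ^ 'n::{finite,linorder}) \<times> real) set) =
     convex hull (insert (0, 0) ((\<lambda>r. (r, 1)) ` cyc_roots))"
proof -
  have "(\<lambda>a. (a, if a = 0 then 0 else 1)) ` S_C =
      insert (0, 0) ((\<lambda>r. (r, 1 :: real)) ` (cyc_roots :: (real, 'n) vec set))"
    using zero_notin_cyc_roots unfolding S_C_def by (auto simp: image_iff)
  then show ?thesis
    by (simp add: lifted_def)
qed

lemma Q_C_height_face:
  assumes h: "\<forall>r\<in>cyc_roots. (h :: real ^ 'n::{finite,linorder}) \<bullet> r \<le> 1"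
  shows "\<forall>p\<in>Q_C. 0 \<le> (-h, 1) \<bullet> p"
    and "{p\<in>Q_C. (-h, 1) \<bullet> p = 0} =
      convex hull (insert (0, 0) ((\<lambda>r. (r, 1)) ` {r \<in> cyc_roots. h \<bullet> r = 1}))"
proof -
  let ?G = "insert (0, 0) ((\<lambda>r. (r, 1 :: real)) ` (cyc_roots :: (real, 'n) vec set))"
  have G: "0 \<le> (-h, 1) \<bullet> g" if "g \<in> ?G" for g
    using that h by (auto simp: inner_Pair)
  then have "Q_C \<subseteq> {p. 0 \<le> (-h, 1) \<bullet> p}"
    unfolding Q_C_eq by (intro hull_minimal) (auto simp: convex_halfspace_ge)
  then show "\<forall>p\<in>Q_C. 0 \<le> (-h, 1) \<bullet> p"
    by blast
  have "{p\<in>Q_C. (-h, 1) \<bullet> p = 0} = convex hull ?G \<inter> {p. (-h, 1) \<bullet> p = 0}"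
    unfolding Q_C_eq by blast
  also have "\<dots> = convex hull {g \<in> ?G. (-h, 1) \<bullet> g = 0}"
    using G finite_cyc_roots by (intro convex_hull_Int_supporting_hyperplane finite_imp_compact) auto
  also have "{g \<in> ?G. (-h, 1) \<bullet> g = 0} = insert (0, 0) ((\<lambda>r. (r, 1)) ` {r \<in> cyc_roots. h \<bullet> r = 1})"
    by (auto simp: inner_Pair)
  finally show "{p\<in>Q_C. (-h, 1) \<bullet> p = 0} =
      convex hull (insert (0, 0) ((\<lambda>r. (r, 1)) ` {r \<in> cyc_roots. h \<bullet> r = 1}))" .
qed

lemma Q_C_height_face_proper:
  assumes "r \<in> cyc_roots" and "(h :: real ^ 'n::{finite,linorder}) \<bullet> r = 1"
  shows "{p\<in>Q_C. (-h, 1) \<bullet> p = 0} \<noteq> Q_C"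
proof -
  have "(- r, 1) \<in> (Q_C :: ((real, 'n) vec \<times> real) set)"
    unfolding Q_C_eq using uminus_mem_cyc_roots[OF assms(1)]
    by (intro hull_inc insertI2 image_eqI[where x = "- r"]) auto
  moreover have "(-h, 1) \<bullet> (- r, 1 :: real) = 2"
    using assms(2) by (simp add: inner_Pair)
  ultimately show ?thesis
    by force
qed

lemma lower_facet_Q_C_of_Lam:
  assumes lam: "lam \<in> Lam j (CARD('n)+1)" and j: "j \<in> {1..CARD('n)+1}"
    and h: "\<forall>i\<in>{1..CARD('n)+1}. (h :: real ^ 'n::{finite,linorder}) \<bullet> edge_vec i = of_int (lam i)"
  shows "lower_facet Q_C {p\<in>Q_C. (-h, 1) \<bullet> p = 0}"
    and "fst ` {p\<in>Q_C. (-h, 1) \<bullet> p = 0} = G0 j lam"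
    and "aff_dim (Q_C :: ((real, 'n) vec \<times> real) set) = CARD('n) + 1"
proof -
  define F where "F = {p\<in>Q_C. (-h, 1) \<bullet> p = 0}"
  note top = top_cyc_roots[OF lam h]
  have ge: "\<forall>p\<in>Q_C. 0 \<le> (-h, 1) \<bullet> p"
    using Q_C_height_face(1)[OF top(1)] .
  have F_eq: "F = convex hull (insert (0, 0) ((\<lambda>r. (r, 1)) ` vertices j lam))"
    unfolding F_def Q_C_height_face(2)[OF top(1)] top(2) ..
  show fst_F: "fst ` {p\<in>Q_C. (-h, 1) \<bullet> p = 0} = G0 j lam"
    unfolding F_def[symmetric] F_eq G0_eq_vertices convex_hull_linear_image[OF linear_fst]
    by (simp add: image_image)
  have face: "F face_of Q_C"
  proof -
    have "Q_C \<inter> {p. (-h, 1) \<bullet> p = 0} face_of Q_C"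
      using ge by (intro face_of_Int_supporting_hyperplane_ge) (auto simp: Q_C_eq)
    then show ?thesis
      by (simp add: F_def Int_def)
  qed
  have "(0, 0) \<in> F"
    by (simp add: F_def Q_C_eq hull_inc)
  moreover have "F \<noteq> Q_C"
  proof -
    define i where "i = (if j = 1 then 2 else 1 :: nat)"
    have "i \<in> {1..CARD('n)+1} - {j}"
      using j zero_less_card_finite[where 'a='n] by (auto simp: i_def)
    then have "vertex lam i \<in> {r \<in> cyc_roots. h \<bullet> r = 1}"
      using top(2) by blast
    then show ?thesis
      unfolding F_def by (intro Q_C_height_face_proper) auto
  qed
  moreover have "int CARD('n) \<le> aff_dim F"
    using aff_dim_linear_image_le[OF linear_fst, of F] fst_F aff_dim_G0[OF lam j]
    by (simp add: F_def)
  ultimately have "F facet_of Q_C" "aff_dim (Q_C :: ((real, 'n) vec \<times> real) set) = CARD('n) + 1"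
    using facet_of_if_aff_dim_ge[OF _ face] by (auto simp: Q_C_eq)
  then show "aff_dim (Q_C :: ((real, 'n) vec \<times> real) set) = CARD('n) + 1"
    and "lower_facet Q_C {p\<in>Q_C. (-h, 1) \<bullet> p = 0}"
    unfolding lower_facet_def F_def using ge
    by (simp, intro conjI exI[where x = "(-h, 1)"] exI[where x = 0]) simp_all
qed

lemma aff_dim_Q_C:
  assumes "odd (CARD('n) + 1)"
  shows "aff_dim (Q_C :: ((real ^ 'n::{finite,linorder}) \<times> real) set) = CARD('n) + 1"
proof -
  obtain j lam where "j \<in> {1..CARD('n)+1}" "lam \<in> Lam j (CARD('n)+1)"
    using P_C_covered[OF assms zero_in_P_C] by metis
  then show ?thesis
    using lower_facet_Q_C_of_Lam(3) inner_height_edge_vec by blast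
qed

lemma sum_of_odd_number_of_signs_nonzero:
  fixes a :: "'i \<Rightarrow> real"
  assumes "finite A" and "odd (card A)" and "\<forall>i\<in>A. \<bar>a i\<bar> = 1"
  shows "(\<Sum>i\<in>A. a i) \<noteq> 0"
proof
  have a_int: "a i = of_int \<lfloor>a i\<rfloor>" "odd \<lfloor>a i\<rfloor>" if "i \<in> A" for i
    using that assms(3) by (auto simp: abs_if floor_minus split: if_splits)
  assume "(\<Sum>i\<in>A. a i) = 0"
  moreover have "of_int (\<Sum>i\<in>A. \<lfloor>a i\<rfloor>) = (\<Sum>i\<in>A. a i)"
    unfolding of_int_sum by (rule sum.cong) (simp_all add: a_int(1)[symmetric])
  ultimately have "even (\<Sum>i\<in>A. \<lfloor>a i\<rfloor>)"
    by (metis of_int_eq_0_iff even_zero)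
  moreover have "{i\<in>A. odd \<lfloor>a i\<rfloor>} = A"
    using a_int(2) by blast
  ultimately show False
    using assms(1,2) even_sum_iff[of A "\<lambda>i. \<lfloor>a i\<rfloor>"] by simp
qed

lemma floor_mem_Lam:
  fixes a :: "nat \<Rightarrow> real"
  assumes "a j = 0" and units: "\<forall>i\<in>{1..N} - {j}. \<bar>a i\<bar> = 1" and sum: "(\<Sum>i=1..N. a i) = 0"
  shows "\<forall>i\<in>{1..N}. a i = of_int \<lfloor>a i\<rfloor>"
    and "(\<lambda>i. if i \<in> {1..N} then \<lfloor>a i\<rfloor> else 0) \<in> Lam j N" (is "?lam \<in> _")
proof -
  have signs: "a i = 1 \<or> a i = -1" if "i \<in> {1..N} - {j}" for i
    using units[rule_format, OF that] by (cases "0 \<le> a i") auto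
  show a_int: "\<forall>i\<in>{1..N}. a i = of_int \<lfloor>a i\<rfloor>"
    using signs \<open>a j = 0\<close> by (force simp: floor_minus)
  show "?lam \<in> Lam j N"
    unfolding Lam_def
  proof (intro CollectI conjI ballI allI impI)
    show "?lam j = 0"
      using \<open>a j = 0\<close> by simp
    show "?lam i \<in> {-1, 1}" if "i \<in> {1..N} - {j}" for i
      using signs[OF that] that by (auto simp: floor_minus simp del: of_int_eq_1_iff)
    show "?lam i = 0" if "i \<notin> {1..N}" for i
      using that by auto
    have "of_int (\<Sum>i=1..N. ?lam i) = (\<Sum>i=1..N. a i)"
      unfolding of_int_sum using a_int by (intro sum.cong) simp_all
    then show "(\<Sum>i=1..N. ?lam i) = 0"
      using sum by (metis of_int_eq_0_iff)
  qed
qed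

lemma Lam_of_extreme_weights:
  fixes a :: "nat \<Rightarrow> real"
  assumes odd: "odd N" and sum: "(\<Sum>i=1..N. a i) = 0" and bound: "\<forall>i\<in>{1..N}. \<bar>a i\<bar> \<le> 1"
    and many: "N - 1 \<le> card {i\<in>{1..N}. \<bar>a i\<bar> = 1}"
  obtains j lam where "j \<in> {1..N}" "lam \<in> Lam j N" "\<forall>i\<in>{1..N}. a i = of_int (lam i)"
proof -
  define K where "K = {i\<in>{1..N}. \<bar>a i\<bar> = 1}"
  have "K \<noteq> {1..N}"
    using sum_of_odd_number_of_signs_nonzero[of "{1..N}" a] odd sum by (auto simp: K_def)
  then obtain j where j: "j \<in> {1..N}" "j \<notin> K"
    unfolding K_def by blast
  have "K \<subseteq> {1..N} - {j}"
    using j by (auto simp: K_def)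
  moreover from this have "card K \<le> N - 1"
    using j card_mono[of "{1..N} - {j}" K] by simp
  ultimately have K_eq: "K = {1..N} - {j}"
    using many j by (intro card_subset_eq) (auto simp: K_def)
  \<comment> \<open>\<open>a\<^sub>j\<close> is an integer in \<open>(-1, 1)\<close>, as all other values are \<open>\<plusminus>1\<close> and they sum to \<open>0\<close>.\<close>
  have "a j = - (\<Sum>i\<in>K. a i)"
    using sum j K_eq sum.remove[of "{1..N}" j a] by simp
  also have "\<dots> = of_int (- (\<Sum>i\<in>K. \<lfloor>a i\<rfloor>))"
    unfolding of_int_minus of_int_sum
    by (intro arg_cong[where f=uminus] sum.cong) (auto simp: K_def abs_if floor_minus split: if_splits)
  finally obtain z :: int where z: "a j = of_int z" ..
  have "\<bar>a j\<bar> \<le> 1" "\<bar>a j\<bar> \<noteq> 1"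
    using bound j by (auto simp: K_def)
  then have "\<bar>z\<bar> \<le> 1" "\<bar>z\<bar> \<noteq> 1"
    unfolding z by linarith+
  then have "a j = 0"
    unfolding z by linarith
  moreover have "\<forall>i\<in>{1..N} - {j}. \<bar>a i\<bar> = 1"
    using K_eq unfolding K_def by blast
  ultimately have "\<forall>i\<in>{1..N}. a i = of_int \<lfloor>a i\<rfloor>"
    and "(\<lambda>i. if i \<in> {1..N} then \<lfloor>a i\<rfloor> else 0) \<in> Lam j N"
    using floor_mem_Lam[of a j N] sum by blast+
  then show ?thesis
    using that[OF j(1)] by simp
qed

lemma card_top_roots_le:
  fixes h :: "real ^ 'n::{finite,linorder}"
  shows "card {r \<in> cyc_roots. h \<bullet> r = 1} \<le> card {i\<in>{1..CARD('n)+1}. \<bar>h \<bullet> edge_vec i\<bar> = 1}"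
proof -
  define K where "K = {i\<in>{1..CARD('n)+1}. \<bar>h \<bullet> edge_vec i\<bar> = 1}"
  define sg :: "nat \<Rightarrow> (real, 'n) vec" where "sg i = (if h \<bullet> edge_vec i = 1 then edge_vec i else - edge_vec i)" for i
  have "{r \<in> cyc_roots. h \<bullet> r = 1} \<subseteq> sg ` K"
  proof
    fix r :: "(real, 'n) vec" assume "r \<in> {r \<in> cyc_roots. h \<bullet> r = 1}"
    then obtain i where i: "i \<in> {1..CARD('n)+1}" and "r = edge_vec i \<or> r = - edge_vec i"
      and "h \<bullet> r = 1"
      by (auto simp: mem_cyc_roots_iff)
    then have "i \<in> K" "r = sg i"
      by (auto simp: K_def sg_def)
    then show "r \<in> sg ` K"
      by blast
  qed
  then have "card {r \<in> cyc_roots. h \<bullet> r = 1} \<le> card (sg ` K)"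
    by (intro card_mono) (simp_all add: K_def)
  also have "\<dots> \<le> card K"
    by (rule card_image_le) (simp add: K_def)
  finally show ?thesis
    by (simp add: K_def)
qed

lemma lower_facet_Q_C_normal:
  assumes odd: "odd (CARD('n) + 1)"
    and F: "lower_facet (Q_C :: ((real ^ 'n::{finite,linorder}) \<times> real) set) F"
  obtains h where "\<forall>r\<in>cyc_roots. h \<bullet> r \<le> 1" and "F = {p\<in>Q_C. (-h, 1) \<bullet> p = 0}"
    and "aff_dim F = CARD('n)"
proof -
  obtain u b where facet: "F facet_of Q_C" and u_pos: "snd u > 0" and supp: "\<forall>p\<in>Q_C. b \<le> u \<bullet> p"
    and F_eq: "F = {p\<in>Q_C. u \<bullet> p = b}"
    using F unfolding lower_facet_def by blast
  have dim_F: "aff_dim F = CARD('n)"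
    using facet aff_dim_Q_C[OF odd] by (simp add: facet_of_def)
  have "b = 0"
    using supporting_hyperplane_through_origin[OF finite_cyc_roots u_pos] supp dim_F
    by (simp add: Q_C_eq F_eq)
  define h where "h = - (1 / snd u) *\<^sub>R fst u"
  have u_h: "u \<bullet> p = snd u * ((-h, 1) \<bullet> p)" for p :: "(real, 'n) vec \<times> real"
    using u_pos by (cases u, cases p) (simp add: h_def inner_Pair algebra_simps)
  have "\<forall>r\<in>cyc_roots. h \<bullet> r \<le> 1"
  proof
    fix r :: "(real, 'n) vec" assume "r \<in> cyc_roots"
    then have "(r, 1) \<in> (Q_C :: ((real, 'n) vec \<times> real) set)"
      unfolding Q_C_eq by (intro hull_inc insertI2 imageI)
    then have "0 \<le> u \<bullet> (r, 1)"
      using supp \<open>b = 0\<close> by blast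
    then have "0 \<le> snd u * ((-h, 1) \<bullet> (r, 1 :: real))"
      by (simp only: u_h)
    then show "h \<bullet> r \<le> 1"
      using u_pos by (simp add: zero_le_mult_iff inner_Pair)
  qed
  moreover have "F = {p\<in>Q_C. (-h, 1) \<bullet> p = 0}"
    unfolding F_eq \<open>b = 0\<close> u_h using u_pos by simp
  ultimately show ?thesis
    using that dim_F by blast
qed

lemma card_top_roots_ge:
  assumes h: "\<forall>r\<in>cyc_roots. (h :: real ^ 'n::{finite,linorder}) \<bullet> r \<le> 1"
    and dim: "aff_dim {p\<in>Q_C. (-h, 1) \<bullet> p = 0} = CARD('n)"
  shows "CARD('n) \<le> card {r \<in> cyc_roots. h \<bullet> r = 1}"
proof -
  define R where "R = {r \<in> cyc_roots. h \<bullet> r = 1}"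
  have fin: "finite R"
    unfolding R_def using finite_cyc_roots[where 'n='n] by simp
  have "int CARD('n) = aff_dim (insert (0, 0) ((\<lambda>r. (r, 1 :: real)) ` R))"
    using dim unfolding Q_C_height_face(2)[OF h] R_def aff_dim_convex_hull by simp
  also have "\<dots> \<le> int (card (insert (0, 0) ((\<lambda>r. (r, 1 :: real)) ` R))) - 1"
    using fin by (intro aff_dim_le_card) simp
  also have "card (insert (0, 0) ((\<lambda>r. (r, 1 :: real)) ` R)) = Suc (card ((\<lambda>r. (r, 1 :: real)) ` R))"
    using fin by (intro card_insert_disjoint finite_imageI) (auto simp: prod_eq_iff)
  also have "card ((\<lambda>r. (r, 1 :: real)) ` R) = card R"
    by (intro card_image inj_onI) simp
  finally show ?thesis
    by (simp add: R_def)
qed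

lemma lower_facet_Q_C_cases:
  assumes odd: "odd (CARD('n) + 1)"
    and F: "lower_facet (Q_C :: ((real ^ 'n::{finite,linorder}) \<times> real) set) F"
  obtains j lam where "j \<in> {1..CARD('n)+1}" "lam \<in> Lam j (CARD('n)+1)" "fst ` F = G0 j lam"
proof -
  let ?N = "{1..CARD('n)+1}"
  obtain h :: "(real, 'n) vec" where h_le: "\<forall>r\<in>cyc_roots. h \<bullet> r \<le> 1"
    and F_h: "F = {p\<in>Q_C. (-h, 1) \<bullet> p = 0}" and dim_F: "aff_dim F = CARD('n)"
    using lower_facet_Q_C_normal[OF odd F] by blast
  have "(\<Sum>i\<in>?N. h \<bullet> edge_vec i) = 0"
    using sum_edge_vec[where 'n='n] by (simp flip: inner_sum_right)
  moreover have "\<forall>i\<in>?N. \<bar>h \<bullet> edge_vec i\<bar> \<le> 1"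
  proof
    fix i assume "i \<in> ?N"
    then have "edge_vec i \<in> (cyc_roots :: (real, 'n) vec set)"
      by (auto simp: mem_cyc_roots_iff)
    then have "h \<bullet> edge_vec i \<le> 1" "h \<bullet> (- edge_vec i) \<le> 1"
      using h_le uminus_mem_cyc_roots by blast+
    then show "\<bar>h \<bullet> edge_vec i\<bar> \<le> 1"
      by (simp add: abs_le_iff)
  qed
  moreover have "CARD('n) + 1 - 1 \<le> card {i\<in>?N. \<bar>h \<bullet> edge_vec i\<bar> = 1}"
    using card_top_roots_ge[OF h_le] card_top_roots_le[of h] dim_F F_h by simp
  ultimately obtain j lam where j: "j \<in> ?N" and lam: "lam \<in> Lam j (CARD('n)+1)"
    and h_lam: "\<forall>i\<in>?N. h \<bullet> edge_vec i = of_int (lam i)"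
    by (rule Lam_of_extreme_weights[OF odd])
  have "fst ` F = G0 j lam"
    unfolding F_h by (rule lower_facet_Q_C_of_Lam(2)[OF lam j h_lam])
  with j lam show ?thesis
    by (rule that)
qed

lemma induced_by_Delta:
  assumes "odd (CARD('n) + 1)"
  shows "induced_by S_C (\<lambda>a. if a = 0 then 0 else 1) (Delta :: (real ^ 'n::{finite,linorder}) set set)"
  unfolding induced_by_def
proof (intro equalityI subsetI)
  fix T :: "(real, 'n) vec set" assume "T \<in> Delta"
  then obtain j lam where j: "j \<in> {1..CARD('n)+1}" and lam: "lam \<in> Lam j (CARD('n)+1)"
    and T: "T = G0 j lam"
    by (rule Delta_cases)
  have "\<forall>i\<in>{1..CARD('n)+1}. (height lam :: (real, 'n) vec) \<bullet> edge_vec i = of_int (lam i)"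
    using inner_height_edge_vec[OF lam] by blast
  note facet = lower_facet_Q_C_of_Lam[OF lam j this]
  show "T \<in> {fst ` F |F. lower_facet Q_C F}"
    using facet(1) facet(2)[symmetric] unfolding T by blast
next
  fix T :: "(real, 'n) vec set" assume "T \<in> {fst ` F |F. lower_facet Q_C F}"
  then obtain F where F: "lower_facet Q_C F" and T: "T = fst ` F"
    by blast
  obtain j lam where "j \<in> {1..CARD('n)+1}" "lam \<in> Lam j (CARD('n)+1)" "fst ` F = G0 j lam"
    by (rule lower_facet_Q_C_cases[OF assms F])
  then show "T \<in> Delta"
    unfolding Delta_def T by blast
qed

theorem proposition5p7:
  fixes D :: "(real ^ 'n::{finite,linorder}) set set"
  assumes "D = Delta"
    and "odd (CARD('n) + 1)" and "CARD('n) + 1 \<ge> 3"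
  shows "is_triangulation D P_C \<and> unimodular D \<and> regular_triangulation S_C D
       \<and> induced_by S_C (\<lambda>a. if a = 0 then 0 else 1) D"
  using is_triangulation_Delta[OF assms(2)] unimodular_Delta induced_by_Delta[OF assms(2)]
  unfolding assms(1) regular_triangulation_def by blast

end
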